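(* Let $(Q,\cdot)$ be a quadratical quasigroup of order $9$. Then there exist distinct $a,b\in Q$ such that $Q=\{aba\}\cup H1\cup H2$, i.e. $Q=\{aba,\ a,\ ab,\ ba,\ b,\ a\cdot ab,\ ab\cdot b,\ ba\cdot a,\ b\cdot ba\}$.
   Context: A quadratical quasigroup is a quasigroup $(Q,\cdot)$ satisfying $xy\cdot x=zx\cdot yz$ for all $x,y,z\in Q$; equivalently, a groupoid satisfying $x\cdot x=x$, $yx\cdot xy=x$ and $xy\cdot zw=xz\cdot yw$. For distinct $a,b$, $aba$ denotes $ab\cdot a$, $H1=\{a,ab,ba,b\}$ and $H2=\{a\cdot ab,\ ab\cdot b,\ ba\cdot a,\ b\cdot ba\}$. *)

theory Defs
  imports Main
begin

definition quasigroup :: "'a set \<Rightarrow> ('a \<Rightarrow> 'a \<Rightarrow> 'a) \<Rightarrow> bool" where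
  "quasigroup Q m \<longleftrightarrow>
     (\<forall>x\<in>Q. \<forall>y\<in>Q. m x y \<in> Q) \<and>
     (\<forall>a\<in>Q. \<forall>b\<in>Q. (\<exists>!x. x \<in> Q \<and> m a x = b) \<and> (\<exists>!y. y \<in> Q \<and> m y a = b))"

definition quadratical_quasigroup :: "'a set \<Rightarrow> ('a \<Rightarrow> 'a \<Rightarrow> 'a) \<Rightarrow> bool" where
  "quadratical_quasigroup Q m \<longleftrightarrow> quasigroup Q m \<and>
     (\<forall>x\<in>Q. \<forall>y\<in>Q. \<forall>z\<in>Q. m (m x y) x = m (m z x) (m y z))"

end

theory Submission
  imports Defs "HOL-Computational_Algebra.Primes" "HOL-Algebra.Multiplicative_Group"
begin

text \<open>
  Fix distinct \<open>a\<close> and \<open>b\<close> (called \<open>e\<close> and \<open>d\<close> in the locales below). A quadratical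
  quasigroup is idempotent and medial, so by Toyoda's construction \<open>x + y = (x/a)(a\y)\<close> is an
  abelian group on \<open>Q\<close> with zero \<open>a\<close>, in which \<open>xy = R x + L y\<close> for the endomorphisms
  \<open>R x = xa\<close> and \<open>L x = ax\<close>, and \<open>x = R x + L x\<close>. The quadratical law gives
  \<open>b + 2 R(R b) = 2 R b\<close>, so in a group of order 9 we get \<open>R(R b) = R b + 4 b\<close>. Hence \<open>R\<close> and \<open>L\<close>
  act linearly on the combinations \<open>i b + j R b\<close>, and the nine elements of the statement are
  such combinations whose coefficient pairs are pairwise distinct modulo 3. They are distinct:
  if \<open>i b + j R b = a\<close> with 3 not dividing both \<open>i\<close> and \<open>j\<close>, applying \<open>R\<close> and eliminating
  \<open>R b\<close> gives \<open>D b = a\<close> for \<open>D = i\<^sup>2 + i j + 32 j\<^sup>2\<close>, which is prime to 3 and hence to \<open>|Q| = 9\<close>,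
  so \<open>b = a\<close>.
\<close>

locale quadratical_qg =
  fixes Q :: "'a set" and m ld rd :: "'a \<Rightarrow> 'a \<Rightarrow> 'a"
  assumes mult_closed: "x \<in> Q \<Longrightarrow> y \<in> Q \<Longrightarrow> m x y \<in> Q"
    and ldiv_closed: "x \<in> Q \<Longrightarrow> y \<in> Q \<Longrightarrow> ld x y \<in> Q"
    and rdiv_closed: "x \<in> Q \<Longrightarrow> y \<in> Q \<Longrightarrow> rd x y \<in> Q"
    and mult_ldiv: "x \<in> Q \<Longrightarrow> y \<in> Q \<Longrightarrow> m x (ld x y) = y"
    and ldiv_mult: "x \<in> Q \<Longrightarrow> y \<in> Q \<Longrightarrow> ld x (m x y) = y"
    and mult_rdiv: "x \<in> Q \<Longrightarrow> y \<in> Q \<Longrightarrow> m (rd x y) y = x"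
    and rdiv_mult: "x \<in> Q \<Longrightarrow> y \<in> Q \<Longrightarrow> rd (m x y) y = x"
    and quadratical: "x \<in> Q \<Longrightarrow> y \<in> Q \<Longrightarrow> z \<in> Q \<Longrightarrow> m (m x y) x = m (m z x) (m y z)"
begin

lemma idempotent: "x \<in> Q \<Longrightarrow> m x x = x"
  by (metis ldiv_mult mult_closed quadratical)

lemma left_distrib: "x \<in> Q \<Longrightarrow> y \<in> Q \<Longrightarrow> z \<in> Q \<Longrightarrow> m x (m y z) = m (m x y) (m x z)"
  by (smt (verit, ccfv_SIG) mult_ldiv idempotent ldiv_closed quadratical)

lemma right_distrib: "x \<in> Q \<Longrightarrow> y \<in> Q \<Longrightarrow> z \<in> Q \<Longrightarrow> m (m x y) z = m (m x z) (m y z)"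
  by (smt (verit, ccfv_SIG) mult_rdiv idempotent quadratical rdiv_closed)

lemma medial:
  "w \<in> Q \<Longrightarrow> x \<in> Q \<Longrightarrow> y \<in> Q \<Longrightarrow> z \<in> Q \<Longrightarrow> m (m w x) (m y z) = m (m w y) (m x z)"
  by (smt (verit, ccfv_SIG) mult_closed idempotent quadratical)

lemma right_cancel: "z \<in> Q \<Longrightarrow> x \<in> Q \<Longrightarrow> y \<in> Q \<Longrightarrow> m x z = m y z \<Longrightarrow> x = y"
  by (metis rdiv_mult)

end

lemma quadratical_quasigroup_divisions:
  assumes "quadratical_quasigroup Q m"
  obtains ld rd where "quadratical_qg Q m ld rd"
proof
  have qg: "quasigroup Q m"
    and law: "\<And>x y z. x \<in> Q \<Longrightarrow> y \<in> Q \<Longrightarrow> z \<in> Q \<Longrightarrow> m (m x y) x = m (m z x) (m y z)"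
    using assms unfolding quadratical_quasigroup_def by blast+
  have closed: "\<And>x y. x \<in> Q \<Longrightarrow> y \<in> Q \<Longrightarrow> m x y \<in> Q"
    and ex_ldiv: "\<And>x y. x \<in> Q \<Longrightarrow> y \<in> Q \<Longrightarrow> \<exists>!z. z \<in> Q \<and> m x z = y"
    and ex_rdiv: "\<And>x y. x \<in> Q \<Longrightarrow> y \<in> Q \<Longrightarrow> \<exists>!z. z \<in> Q \<and> m z y = x"
    using qg unfolding quasigroup_def by auto
  define ld where "ld x y = (THE z. z \<in> Q \<and> m x z = y)" for x y
  define rd where "rd x y = (THE z. z \<in> Q \<and> m z y = x)" for x y
  have ld: "ld x y \<in> Q \<and> m x (ld x y) = y" if "x \<in> Q" "y \<in> Q" for x y
    unfolding ld_def using ex_ldiv[OF that] by (rule theI')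
  have rd: "rd x y \<in> Q \<and> m (rd x y) y = x" if "x \<in> Q" "y \<in> Q" for x y
    unfolding rd_def using ex_rdiv[OF that] by (rule theI')
  have ld_mult: "ld x (m x y) = y" if "x \<in> Q" "y \<in> Q" for x y
    unfolding ld_def by (rule the1_equality) (use that ex_ldiv closed in auto)
  have rd_mult: "rd (m x y) y = x" if "x \<in> Q" "y \<in> Q" for x y
    unfolding rd_def by (rule the1_equality) (use that ex_rdiv closed in auto)
  show "quadratical_qg Q m ld rd"
    by unfold_locales (auto simp: closed ld rd ld_mult rd_mult intro: law)
qed

locale quadratical_pointed = quadratical_qg +
  fixes e assumes e_in: "e \<in> Q"
begin

definition add :: "'a \<Rightarrow> 'a \<Rightarrow> 'a" where
  "add x y = m (rd x e) (ld e y)"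

lemma add_closed: "x \<in> Q \<Longrightarrow> y \<in> Q \<Longrightarrow> add x y \<in> Q"
  unfolding add_def by (simp add: mult_closed ldiv_closed rdiv_closed e_in)

lemma add_e_left: "y \<in> Q \<Longrightarrow> add e y = y"
  unfolding add_def by (metis e_in idempotent mult_ldiv rdiv_mult)

lemma add_e_right: "x \<in> Q \<Longrightarrow> add x e = x"
  unfolding add_def by (metis e_in idempotent ldiv_mult mult_rdiv)

lemma mult_eq_add: "x \<in> Q \<Longrightarrow> y \<in> Q \<Longrightarrow> m x y = add (m x e) (m e y)"
  unfolding add_def by (simp add: ldiv_mult rdiv_mult e_in)

lemma add_right_mult_left_mult: "x \<in> Q \<Longrightarrow> add (m x e) (m e x) = x"
  using mult_eq_add idempotent by metis

lemma right_mult_left_mult_commute: "x \<in> Q \<Longrightarrow> m (m e x) e = m e (m x e)"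
  by (metis e_in idempotent medial)

lemma right_mult_add: assumes x: "x \<in> Q" and y: "y \<in> Q"
  shows "m (add x y) e = add (m x e) (m y e)"
proof -
  define p q where "p = rd x e" and "q = ld e y"
  have pq: "p \<in> Q" "q \<in> Q" "m p e = x" "m e q = y"
    using x y e_in ldiv_closed rdiv_closed mult_ldiv mult_rdiv by (auto simp: p_def q_def)
  have add_xy: "m (add x y) e = m x (m q e)"
    unfolding add_def p_def[symmetric] q_def[symmetric] using right_distrib[of p q e] pq e_in by simp
  have "m e (m q e) = m y e"
    using left_distrib[of e q e] pq e_in idempotent by simp
  then have "ld e (m y e) = m q e"
    using ldiv_mult[of e "m q e"] pq e_in mult_closed by simp
  then show ?thesis
    unfolding add_def[of "m x e"] using add_xy rdiv_mult[of x e] x e_in by simp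
qed

lemma add_comm: assumes x: "x \<in> Q" and y: "y \<in> Q" shows "add x y = add y x"
proof -
  define p q u v where "p = rd x e" and "q = ld e y" and "u = rd y e" and "v = ld e x"
  have in_Q: "p \<in> Q" "q \<in> Q" "u \<in> Q" "v \<in> Q"
    using x y e_in ldiv_closed rdiv_closed by (auto simp: p_def q_def u_def v_def)
  have eqs: "m p e = x" "m e q = y" "m u e = y" "m e v = x"
    using x y e_in mult_ldiv mult_rdiv by (auto simp: p_def q_def u_def v_def)
  have "m (m p q) e = m (m p e) (m q e)" using right_distrib in_Q e_in by auto
  also have "\<dots> = m (m e q) (m v e)" using medial in_Q e_in eqs by metis
  also have "\<dots> = m (m u v) e" using right_distrib in_Q e_in eqs by auto
  finally have "m p q = m u v" using right_cancel[of e] in_Q e_in mult_closed by simp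
  then show ?thesis unfolding add_def p_def q_def u_def v_def .
qed

lemma add_assoc: assumes x: "x \<in> Q" and y: "y \<in> Q" and z: "z \<in> Q"
  shows "add (add x y) z = add x (add y z)"
proof -
  define p q where "p = rd x e" and "q = ld e y"
  define a b c where "a = rd p e" and "b = rd q e" and "c = ld e (ld e z)"
  have in_Q: "p \<in> Q" "q \<in> Q" "a \<in> Q" "b \<in> Q" "c \<in> Q"
    using x y z e_in ldiv_closed rdiv_closed by (auto simp: p_def q_def a_def b_def c_def)
  have eqs: "m a e = p" "m b e = q" "m e c = ld e z" "m p e = x" "m e q = y"
    using x y z e_in mult_ldiv mult_rdiv ldiv_closed rdiv_closed
    by (auto simp: p_def q_def a_def b_def c_def)
  have "m (m a b) e = m p q" using right_distrib[of a b e] in_Q e_in eqs by simp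
  then have rd_pq: "rd (m p q) e = m a b" using rdiv_mult[of "m a b" e] in_Q mult_closed e_in by simp
  have "m (m e b) e = y" using right_mult_left_mult_commute in_Q eqs by simp
  then have "rd y e = m e b" using rdiv_mult[of "m e b" e] in_Q mult_closed e_in by simp
  then have "add y z = m e (m b c)"
    unfolding add_def using eqs left_distrib[of e b c] in_Q e_in by simp
  then have ld_yz: "ld e (add y z) = m b c" using ldiv_mult[of e "m b c"] in_Q mult_closed e_in by simp
  have "add (add x y) z = m (m a b) (m e c)" unfolding add_def using rd_pq eqs p_def q_def by simp
  also have "\<dots> = m (m a e) (m b c)" using medial[of a b e c] in_Q e_in by simp
  also have "\<dots> = add x (add y z)" using ld_yz eqs unfolding add_def p_def by simp
  finally show ?thesis .
qed

lemma add_left_inverse: "x \<in> Q \<Longrightarrow> \<exists>y\<in>Q. add y x = e"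
  by (rule bexI[of _ "m (rd e (ld e x)) e"])
    (auto simp: add_def e_in mult_rdiv rdiv_mult ldiv_closed rdiv_closed mult_closed)

lemma add_left_commute: "x \<in> Q \<Longrightarrow> y \<in> Q \<Longrightarrow> z \<in> Q \<Longrightarrow> add x (add y z) = add y (add x z)"
  by (metis add_assoc add_comm)

lemmas add_ac = add_assoc add_comm add_left_commute

lemma add_left_cancel: "c \<in> Q \<Longrightarrow> x \<in> Q \<Longrightarrow> y \<in> Q \<Longrightarrow> add c x = add c y \<Longrightarrow> x = y"
  by (metis add_assoc add_e_left add_left_inverse)

fun add_pow :: "'a \<Rightarrow> nat \<Rightarrow> 'a" where
  "add_pow x 0 = e"
| "add_pow x (Suc n) = add (add_pow x n) x"

lemma add_pow_closed [simp]: "x \<in> Q \<Longrightarrow> add_pow x n \<in> Q"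
  by (induction n) (auto simp: e_in add_closed)

lemma add_pow_one: "x \<in> Q \<Longrightarrow> add_pow x 1 = x"
  by (simp add: add_e_left)

lemma add_pow_add: "x \<in> Q \<Longrightarrow> add_pow x (k + n) = add (add_pow x k) (add_pow x n)"
  by (induction n) (auto simp: add_e_right add_assoc)

lemma add_pow_mult: "x \<in> Q \<Longrightarrow> add_pow x (k * n) = add_pow (add_pow x k) n"
  by (induction n) (auto simp: add_pow_add add_comm)

lemma add_pow_e: "add_pow e n = e"
  by (induction n) (auto simp: add_e_left e_in)

lemma add_pow_distrib: "x \<in> Q \<Longrightarrow> y \<in> Q \<Longrightarrow> add_pow (add x y) n = add (add_pow x n) (add_pow y n)"
  by (induction n) (auto simp: add_e_left e_in add_ac add_closed)

lemma right_mult_add_pow: "x \<in> Q \<Longrightarrow> m (add_pow x n) e = add_pow (m x e) n"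
  by (induction n) (auto simp: idempotent e_in right_mult_add)

definition add_group :: "'a monoid" where
  "add_group = \<lparr>carrier = Q, mult = add, one = e\<rparr>"

lemma comm_group_add_group: "comm_group add_group"
proof (rule comm_groupI)
  fix x y assume "x \<in> carrier add_group" "y \<in> carrier add_group"
  then show "x \<otimes>\<^bsub>add_group\<^esub> y = y \<otimes>\<^bsub>add_group\<^esub> x"
    by (simp add: add_group_def add_comm)
qed (auto simp: add_group_def add_closed e_in add_assoc add_e_left add_left_inverse)

lemma add_pow_eq_nat_pow: "add_pow x n = x [^]\<^bsub>add_group\<^esub> n"
  by (induction n) (auto simp: add_group_def)

lemma add_pow_card: "finite Q \<Longrightarrow> x \<in> Q \<Longrightarrow> add_pow x (card Q) = e"
proof -
  assume "finite Q" "x \<in> Q"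
  interpret comm_group add_group by (rule comm_group_add_group)
  have "x [^]\<^bsub>add_group\<^esub> order add_group = \<one>\<^bsub>add_group\<^esub>"
    using \<open>x \<in> Q\<close> by (intro pow_order_eq_1) (simp add: add_group_def)
  then show ?thesis by (simp add: add_pow_eq_nat_pow order_def add_group_def)
qed

lemma eq_e_if_add_pow_coprime:
  assumes "finite Q" "x \<in> Q" "add_pow x n = e" "coprime n (card Q)"
  shows "x = e"
proof -
  interpret comm_group add_group by (rule comm_group_add_group)
  have x: "x \<in> carrier add_group" using assms(2) by (simp add: add_group_def)
  have "ord x dvd n"
    using assms(3) pow_eq_id[OF x] by (simp add: add_pow_eq_nat_pow add_group_def)
  moreover have "ord x dvd card Q"
    using ord_dvd_group_order[OF x] by (simp add: order_def add_group_def)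
  ultimately have "ord x = 1" using assms(4) by (metis coprime_common_divisor_nat)
  then show ?thesis using ord_eq_1[OF x] by (simp add: add_group_def)
qed

lemma right_mult_square:
  assumes d: "d \<in> Q"
  shows "add d (add_pow (m (m d e) e) 2) = add_pow (m d e) 2"
proof -
  define u w l where "u = m d e" and "w = m u e" and "l = m e d"
  have in_Q: "u \<in> Q" "w \<in> Q" "l \<in> Q" using d e_in mult_closed by (auto simp: u_def w_def l_def)
  have d_eq: "add u l = d" using add_right_mult_left_mult d by (simp add: u_def l_def)
  have "m u d = m l e" using quadratical[of d e e] idempotent e_in d by (simp add: u_def l_def)
  then have w_l: "add w l = m l e" using mult_eq_add[of u d] in_Q d by (simp add: u_def w_def l_def)
  have "m (add u l) e = u" using d_eq by (simp add: u_def)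
  then have "add w (m l e) = u" using right_mult_add in_Q by (simp add: w_def)
  then have "add (add u l) (add w w) = add u u"
    using w_l in_Q by (metis add_ac add_closed)
  then show ?thesis
    using d_eq in_Q by (simp add: numeral_2_eq_2 add_e_left u_def w_def)
qed

end

lemma not_3_dvd_quadratic_form:
  fixes p q :: nat
  assumes "\<not> (3 dvd p \<and> 3 dvd q)"
  shows "\<not> 3 dvd (p + q) * p + 32 * q * q"
proof -
  define a b where "a = p mod 3" and "b = q mod 3"
  define i j where "i = p div 3" and "j = q div 3"
  have p: "p = 3 * i + a" and q: "q = 3 * j + b"
    by (simp_all add: a_def b_def i_def j_def)
  have "(p + q) * p + 32 * q * q
      = 3 * ((i + j) * p + (a + b) * i + 32 * (3 * j * j + 2 * j * b)) + ((a + b) * a + 32 * b * b)"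
    unfolding p q by (simp add: algebra_simps)
  then have "3 dvd (p + q) * p + 32 * q * q \<longleftrightarrow> 3 dvd (a + b) * a + 32 * b * b"
    by (simp add: dvd_add_right_iff)
  moreover have "a \<in> {0, 1, 2}" "b \<in> {0, 1, 2}" "3 dvd p \<longleftrightarrow> a = 0" "3 dvd q \<longleftrightarrow> b = 0"
    by (auto simp: a_def b_def)
  ultimately show ?thesis using assms by auto
qed

lemma coprime_9_if_not_3_dvd: "\<not> 3 dvd (n::nat) \<Longrightarrow> coprime n 9"
  using coprime_power_right_iff[of n 3 2] prime_imp_coprime[of 3 n]
  by (simp add: coprime_commute)

lemma mod_3_eq_if_dvd:
  fixes a c :: nat
  assumes "3 dvd a + 8 * c"
  shows "a mod 3 = c mod 3"
proof -
  define r s i j where "r = a mod 3" and "s = c mod 3" and "i = a div 3" and "j = c div 3"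
  have a: "a = 3 * i + r" and c: "c = 3 * j + s"
    by (simp_all add: r_def s_def i_def j_def)
  have "a + 8 * c = 3 * (i + 8 * j) + (r + 8 * s)"
    unfolding a c by simp
  then have "3 dvd r + 8 * s"
    using assms by (simp add: dvd_add_right_iff)
  moreover have "r \<in> {0, 1, 2}" "s \<in> {0, 1, 2}" by (auto simp: r_def s_def)
  ultimately show ?thesis by (auto simp: r_def[symmetric] s_def[symmetric])
qed

locale quadratical_order_9 = quadratical_pointed +
  fixes d assumes finite: "finite Q" and card_9: "card Q = 9" and d_in: "d \<in> Q"
begin

lemma add_pow_9: "x \<in> Q \<Longrightarrow> add_pow x 9 = e"
  using add_pow_card finite card_9 by simp

lemma add_pow_mod_9: "x \<in> Q \<Longrightarrow> add_pow x n = add_pow x (n mod 9)"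
proof -
  assume x: "x \<in> Q"
  have "add_pow x n = add_pow x (9 * (n div 9) + n mod 9)" by simp
  also have "\<dots> = add (add_pow (add_pow x 9) (n div 9)) (add_pow x (n mod 9))"
    by (simp only: add_pow_add add_pow_mult x)
  finally show ?thesis by (simp add: add_pow_9 x add_pow_e add_e_left)
qed

text \<open>Multiplying \<open>right_mult_square\<close> by 5, the inverse of 2 modulo 9.\<close>

lemma right_mult_right_mult_d: "m (m d e) e = add (m d e) (add_pow d 4)"
proof -
  define u w where "u = m d e" and "w = m u e"
  have in_Q: "u \<in> Q" "w \<in> Q" using d_in e_in mult_closed by (auto simp: u_def w_def)
  have "add_pow (add d (add_pow w 2)) 5 = add_pow (add_pow u 2) 5"
    using right_mult_square[OF d_in] by (simp add: u_def w_def)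
  then have "add (add_pow d 5) (add_pow w 10) = add_pow u 10"
    using in_Q d_in by (simp add: add_pow_distrib add_pow_mult[symmetric])
  then have "add (add_pow d 5) w = u"
    using add_pow_mod_9[of _ 10] add_pow_one in_Q by simp
  then have "add (add (add_pow d 4) (add_pow d 5)) w = add (add_pow d 4) u"
    using in_Q d_in add_assoc by simp
  then have "add (add_pow d 9) w = add (add_pow d 4) u"
    using d_in add_pow_add[of d 4 5] by simp
  then show ?thesis
    using add_pow_9 d_in in_Q add_e_left add_comm by (simp add: u_def w_def)
qed

definition lin :: "nat \<Rightarrow> nat \<Rightarrow> 'a" where
  "lin a b = add (add_pow d a) (add_pow (m d e) b)"

lemma lin_closed [simp]: "lin a b \<in> Q"
  unfolding lin_def using d_in e_in mult_closed add_closed by simp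

lemma lin_add: "add (lin a b) (lin c f) = lin (a + c) (b + f)"
  unfolding lin_def using d_in e_in mult_closed by (simp add: add_pow_add add_ac add_closed)

lemma lin_mod_9: "lin a b = lin (a mod 9) (b mod 9)"
  unfolding lin_def using d_in e_in mult_closed add_pow_mod_9 by metis

lemma lin_add_pow: "add_pow (lin a b) k = lin (a * k) (b * k)"
  unfolding lin_def using d_in e_in mult_closed by (simp add: add_pow_distrib add_pow_mult)

lemma lin_0_0: "lin 0 0 = e"
  unfolding lin_def by (simp add: add_e_left e_in)

lemma lin_1_0: "lin 1 0 = d"
  unfolding lin_def using d_in by (simp add: add_e_left add_e_right)

lemma right_mult_lin: "m (lin a b) e = lin (4 * b) (a + b)"
proof -
  have "m (lin a b) e = add (add_pow (m d e) a) (add_pow (add (m d e) (add_pow d 4)) b)"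
    unfolding lin_def using d_in e_in mult_closed
    by (simp add: right_mult_add right_mult_add_pow right_mult_right_mult_d)
  also have "\<dots> = lin (4 * b) (a + b)"
    unfolding lin_def using d_in e_in mult_closed
    by (simp add: add_pow_distrib add_pow_add add_pow_mult[symmetric] add_ac add_closed mult.commute)
  finally show ?thesis .
qed

lemma left_mult_lin: "m e (lin a b) = lin (a + 5 * b) (8 * a)"
proof -
  have "add (m (lin a b) e) (lin (a + 5 * b) (8 * a)) = lin (a + 9 * b) (9 * a + b)"
    by (simp add: right_mult_lin lin_add algebra_simps)
  also have "\<dots> = lin a b" using lin_mod_9[of "a + 9 * b"] lin_mod_9[of a b] by simp
  also have "\<dots> = add (m (lin a b) e) (m e (lin a b))" using add_right_mult_left_mult by simp
  finally show ?thesis using add_left_cancel mult_closed e_in lin_closed by metis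
qed

lemma mult_lin: "m (lin a b) (lin c f) = lin (4 * b + (c + 5 * f)) (a + b + 8 * c)"
  using mult_eq_add[of "lin a b" "lin c f"] by (simp add: right_mult_lin left_mult_lin lin_add)

lemma d_eq_e_if_lin_eq_e:
  assumes "lin p q = e" and "\<not> (3 dvd p \<and> 3 dvd q)"
  shows "d = e"
proof -
  define D where "D = (p + q) * p + 32 * q * q"
  have "lin (4 * q) (p + q) = e" using right_mult_lin[of p q] assms(1) idempotent e_in by simp
  then have "add (add_pow (lin p q) (p + q)) (add_pow (lin (4 * q) (p + q)) (8 * q)) = e"
    using assms(1) by (simp add: add_pow_e add_e_left e_in)
  then have "lin D (9 * (q * (p + q))) = e"
    by (simp add: lin_add_pow lin_add D_def algebra_simps)
  then have "add_pow d D = e"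
    using lin_mod_9[of D "9 * _"] lin_mod_9[of D 0] d_in by (simp add: lin_def add_e_right)
  moreover have "coprime D (card Q)"
    using not_3_dvd_quadratic_form[OF assms(2)] coprime_9_if_not_3_dvd card_9 by (simp add: D_def)
  ultimately show ?thesis using eq_e_if_add_pow_coprime finite d_in by blast
qed

lemma lin_neq_if_mod_3_neq:
  assumes "d \<noteq> e" and "\<not> (a mod 3 = c mod 3 \<and> b mod 3 = f mod 3)"
  shows "lin a b \<noteq> lin c f"
proof
  assume "lin a b = lin c f"
  have "lin (a + 8 * c) (b + 8 * f) = lin (9 * c) (9 * f)"
    using \<open>lin a b = lin c f\<close> lin_add[of a b "8 * c" "8 * f"] lin_add[of c f "8 * c" "8 * f"]
    by simp
  also have "\<dots> = e" using lin_mod_9[of "9 * c" "9 * f"] lin_0_0 by simp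
  finally have "3 dvd a + 8 * c" "3 dvd b + 8 * f"
    using d_eq_e_if_lin_eq_e assms(1) by blast+
  then have "a mod 3 = c mod 3" "b mod 3 = f mod 3" by (simp_all add: mod_3_eq_if_dvd)
  with assms(2) show False by simp
qed

lemma card_aba_H1_H2:
  assumes "d \<noteq> e"
  shows "card ({m (m e d) e} \<union> {e, m e d, m d e, d}
            \<union> {m e (m e d), m (m e d) d, m (m d e) e, m d (m d e)}) = 9"
proof -
  have "m e d = lin 1 8" "m d e = lin 0 1"
    using mult_lin[of 0 0 1 0] mult_lin[of 1 0 0 0] lin_0_0 lin_1_0 by simp_all
  then have "{m (m e d) e} \<union> {e, m e d, m d e, d}
            \<union> {m e (m e d), m (m e d) d, m (m d e) e, m d (m d e)}
      = {lin 32 9, lin 0 0, lin 1 8, lin 0 1, lin 1 0, lin 41 8, lin 33 17, lin 4 1, lin 5 1}"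
    using mult_lin[of 1 8 0 0] mult_lin[of 0 0 1 8] mult_lin[of 1 8 1 0] mult_lin[of 0 1 0 0]
      mult_lin[of 1 0 0 1] lin_0_0 lin_1_0 by auto
  also have "card \<dots> = 9"
    using lin_neq_if_mod_3_neq[OF assms] by simp
  finally show ?thesis .
qed

end

theorem proposition4p2:
  fixes Q :: "'a set" and m :: "'a \<Rightarrow> 'a \<Rightarrow> 'a"
  assumes "quadratical_quasigroup Q m"
    and "finite Q" and "card Q = 9"
  shows "\<exists>a\<in>Q. \<exists>b\<in>Q. a \<noteq> b \<and>
    Q = {m (m a b) a} \<union> {a, m a b, m b a, b}
        \<union> {m a (m a b), m (m a b) b, m (m b a) a, m b (m b a)}"
proof -
  obtain ld rd where qg: "quadratical_qg Q m ld rd"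
    using quadratical_quasigroup_divisions assms(1) by blast
  have "\<not> card Q \<le> Suc 0" using assms(3) by simp
  then obtain a b where ab: "a \<in> Q" "b \<in> Q" "a \<noteq> b"
    using card_le_Suc0_iff_eq[OF assms(2)] by blast
  interpret quadratical_order_9 Q m ld rd a b
    by (intro quadratical_order_9.intro quadratical_pointed.intro qg) (unfold_locales, use ab assms in auto)
  let ?S = "{m (m a b) a} \<union> {a, m a b, m b a, b}
        \<union> {m a (m a b), m (m a b) b, m (m b a) a, m b (m b a)}"
  have "?S \<subseteq> Q" using ab mult_closed by auto
  moreover have "card ?S = card Q" using card_aba_H1_H2 ab assms(3) by simp
  ultimately have "?S = Q" using card_subset_eq assms(2) by blast
  then show ?thesis using ab by blast
qed

end
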